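(* Let $n,d\in\mathbb{N}_*$, let $p$ be a prime number with $p>d^n$, and let $K$ be a commutative domain of characteristic $p$. Then $\mathrm{CJC}(n,p,d,K)$ holds if and only if $\mathrm{NJC}(n,p,d,K)$ holds.
   Context: $\mathbb{N}_*=\mathbb{N}\setminus\{0\}$; for a domain $R$, $R_*^{-1}R$ is its fraction field, with $R_*=R\setminus\{0\}$; $K^*$ is the unit group of $K$; $p\mathbb{N}=\{pk:k\in\mathbb{N}\}$. For $n,d\in\mathbb{N}_*$, $p$ equal to $0$ or a prime, and $K$ a commutative domain of characteristic $p$, the statement $\mathrm{CJC}(n,p,d,K)$ is: for every pair of polynomial $K$-algebras $A$, $B$ in $n$ indeterminates and every injective $K$-algebra homomorphism $\phi:A\to B$ such that $\deg\phi(X)\le d$ for each indeterminate $X$ of $A$, letting $J(\phi)$ be the Jacobian matrix of $(\phi(X_1),\dots,\phi(X_n))$ (where $X_1,\dots,X_n$ are the indeterminates of $A$) with respect to the indeterminates of $B$, the following are equivalent: (1) $\phi$ is an isomorphism; (2) $\det J(\phi)\in K^*$ and $[B_*^{-1}B:\phi(A_* )^{-1}\phi(A)]\notin p\mathbb{N}$. The statement $\mathrm{NJC}(n,p,d,K)$ is the same statement with the condition $[B_*^{-1}B:\phi(A_* )^{-1}\phi(A)]\notin p\mathbb{N}$ deleted from (2), i.e. $\phi$ is an isomorphism if and only if $\det J(\phi)\in K^*$. *)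

theory Defs
  imports "HOL-Library.Poly_Mapping" "HOL-Computational_Algebra.Fraction_Field"
    "HOL-Combinatorics.Permutations" "HOL-Library.Extended_Nat" "HOL-Computational_Algebra.Primes"
begin

text \<open>Polynomials over K in the indeterminates X_0, X_1, ... :
  finitely supported maps from monomials (exponent vectors) to coefficients.\<close>
type_synonym 'a mpoly = "(nat \<Rightarrow>\<^sub>0 nat) \<Rightarrow>\<^sub>0 'a"

definition polys_n :: "nat \<Rightarrow> 'a::zero mpoly set" where
  "polys_n n = {f. \<forall>m \<in> Poly_Mapping.keys f. Poly_Mapping.keys m \<subseteq> {..<n}}"

definition Var :: "nat \<Rightarrow> 'a::{zero,one} mpoly" where
  "Var i = Poly_Mapping.single (Poly_Mapping.single i 1) 1"

definition Const :: "'a::zero \<Rightarrow> 'a mpoly" where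
  "Const c = Poly_Mapping.single 0 c"

text \<open>Total degree (the zero polynomial gets degree 0).\<close>
definition tdeg :: "'a::zero mpoly \<Rightarrow> nat" where
  "tdeg f = Max (insert 0 ((\<lambda>m. sum (Poly_Mapping.lookup m) (Poly_Mapping.keys m)) ` Poly_Mapping.keys f))"

definition pderiv_mp :: "nat \<Rightarrow> 'a::comm_ring_1 mpoly \<Rightarrow> 'a mpoly" where
  "pderiv_mp j g = (\<Sum>m\<in>Poly_Mapping.keys g. Poly_Mapping.single (m - Poly_Mapping.single j 1)
                                    (of_nat (Poly_Mapping.lookup m j) * Poly_Mapping.lookup g m))"

definition is_Kalg_hom :: "nat \<Rightarrow> ('a::comm_ring_1 mpoly \<Rightarrow> 'a mpoly) \<Rightarrow> bool" where
  "is_Kalg_hom n \<phi> \<longleftrightarrow>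
     (\<forall>f\<in>polys_n n. \<phi> f \<in> polys_n n) \<and>
     (\<forall>f\<in>polys_n n. \<forall>g\<in>polys_n n. \<phi> (f + g) = \<phi> f + \<phi> g \<and> \<phi> (f * g) = \<phi> f * \<phi> g) \<and>
     (\<forall>c. \<phi> (Const c) = Const c)"

definition jac_det :: "nat \<Rightarrow> ('a::comm_ring_1 mpoly \<Rightarrow> 'a mpoly) \<Rightarrow> 'a mpoly" where
  "jac_det n \<phi> = (\<Sum>\<sigma>\<in>{\<sigma>. \<sigma> permutes {..<n}}.
        of_int (sign \<sigma>) * (\<Prod>i<n. pderiv_mp (\<sigma> i) (\<phi> (Var i))))"

definition frac_B :: "nat \<Rightarrow> 'a::idom mpoly fract set" where
  "frac_B n = {Fraction_Field.Fract a b | a b. a \<in> polys_n n \<and> b \<in> polys_n n \<and> b \<noteq> 0}"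

definition frac_img :: "nat \<Rightarrow> ('a::idom mpoly \<Rightarrow> 'a mpoly) \<Rightarrow> 'a mpoly fract set" where
  "frac_img n \<phi> = {Fraction_Field.Fract (\<phi> a) (\<phi> b) | a b. a \<in> polys_n n \<and> b \<in> polys_n n \<and> b \<noteq> 0}"

text \<open>Linear independence over a subfield L, and the degree [E : L] (dimension of E as
  an L-vector space, i.e. the supremum of the sizes of L-linearly independent finite subsets;
  infinity if unbounded).\<close>
definition lin_indep_over :: "'b::field set \<Rightarrow> 'b set \<Rightarrow> bool" where
  "lin_indep_over L S \<longleftrightarrow>
     (\<forall>c. (\<forall>s\<in>S. c s \<in> L) \<and> (\<Sum>s\<in>S. c s * s) = 0 \<longrightarrow> (\<forall>s\<in>S. c s = 0))"

definition ext_degree :: "'b::field set \<Rightarrow> 'b set \<Rightarrow> enat" where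
  "ext_degree E L = Sup {enat (card S) | S. finite S \<and> S \<subseteq> E \<and> lin_indep_over L S}"

definition CJC :: "nat \<Rightarrow> nat \<Rightarrow> nat \<Rightarrow> 'a::idom itself \<Rightarrow> bool" where
  "CJC n p d (_::'a itself) \<longleftrightarrow>
     (\<forall>\<phi> :: 'a mpoly \<Rightarrow> 'a mpoly.
        is_Kalg_hom n \<phi> \<and> inj_on \<phi> (polys_n n) \<and> (\<forall>i<n. tdeg (\<phi> (Var i)) \<le> d) \<longrightarrow>
        (bij_betw \<phi> (polys_n n) (polys_n n) \<longleftrightarrow>
           (jac_det n \<phi> \<in> Const ` {c. c dvd 1} \<and>
            \<not> (\<exists>k. ext_degree (frac_B n) (frac_img n \<phi>) = enat (p * k)))))"

definition NJC :: "nat \<Rightarrow> nat \<Rightarrow> nat \<Rightarrow> 'a::idom itself \<Rightarrow> bool" where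
  "NJC n p d (_::'a itself) \<longleftrightarrow>
     (\<forall>\<phi> :: 'a mpoly \<Rightarrow> 'a mpoly.
        is_Kalg_hom n \<phi> \<and> inj_on \<phi> (polys_n n) \<and> (\<forall>i<n. tdeg (\<phi> (Var i)) \<le> d) \<longrightarrow>
        (bij_betw \<phi> (polys_n n) (polys_n n) \<longleftrightarrow> jac_det n \<phi> \<in> Const ` {c. c dvd 1}))"

end

theory Submission
  imports Defs Complex_Main
begin

(* For every injective K-algebra endomorphism phi of B = K[X_1..X_n] with deg phi(X_i) <= d,
   the degree [Frac B : Frac phi(B)] lies between 1 and d^n < p, so it is never a multiple of p
   and the extra condition of CJC holds automatically.
   The upper bound is a dimension count. If s_1..s_m in Frac B are linearly independent over
   Frac phi(B), write s_j = P_j / Q with a common denominator Q. By injectivity of phi the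
   products P_j phi(x^a), deg x^a <= t, are K-linearly independent, and they have degree at most
   D + d t with D = sum_j deg P_j. Counting monomials gives m C(t+n, n) <= C(D+dt+n, n) for all t,
   and letting t tend to infinity gives m <= d^n. *)

definition monomial_degree :: "(nat \<Rightarrow>\<^sub>0 nat) \<Rightarrow> nat" where
  "monomial_degree a = sum (Poly_Mapping.lookup a) (Poly_Mapping.keys a)"

lemma monomial_degree_eq_sum:
  "finite A \<Longrightarrow> Poly_Mapping.keys a \<subseteq> A \<Longrightarrow> monomial_degree a = sum (Poly_Mapping.lookup a) A"
  unfolding monomial_degree_def by (rule sum.mono_neutral_left) (auto simp: in_keys_iff)

lemma monomial_degree_add: "monomial_degree (a + b) = monomial_degree a + monomial_degree b"
proof -
  let ?A = "Poly_Mapping.keys a \<union> Poly_Mapping.keys b"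
  have "monomial_degree (a + b) = sum (Poly_Mapping.lookup (a + b)) ?A"
    using keys_add[of a b] by (simp add: monomial_degree_eq_sum)
  also have "\<dots> = sum (Poly_Mapping.lookup a) ?A + sum (Poly_Mapping.lookup b) ?A"
    by (simp add: lookup_add sum.distrib)
  also have "\<dots> = monomial_degree a + monomial_degree b"
    using monomial_degree_eq_sum[of ?A a] monomial_degree_eq_sum[of ?A b] by simp
  finally show ?thesis .
qed

lemma monomial_degree_single [simp]: "monomial_degree (Poly_Mapping.single i k) = k"
  by (simp add: monomial_degree_def)

lemma monomial_degree_eq_0_iff: "monomial_degree a = 0 \<longleftrightarrow> a = 0"
  by (auto simp: monomial_degree_def in_keys_iff intro: poly_mapping_eqI)

lemma tdeg_le_iff: "tdeg f \<le> T \<longleftrightarrow> (\<forall>a\<in>Poly_Mapping.keys f. monomial_degree a \<le> T)"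
  unfolding tdeg_def monomial_degree_def[abs_def] by auto

lemma monomial_degree_le_tdeg: "a \<in> Poly_Mapping.keys f \<Longrightarrow> monomial_degree a \<le> tdeg f"
  using tdeg_le_iff[of f "tdeg f"] by auto

lemma tdeg_mult_le: "tdeg (f * g) \<le> tdeg f + tdeg g"
proof -
  have "monomial_degree c \<le> tdeg f + tdeg g" if "c \<in> Poly_Mapping.keys (f * g)" for c
  proof -
    from that keys_mult obtain a b where "c = a + b"
      "a \<in> Poly_Mapping.keys f" "b \<in> Poly_Mapping.keys g"
      by blast
    then show ?thesis
      using monomial_degree_le_tdeg[of a f] monomial_degree_le_tdeg[of b g]
      by (simp add: monomial_degree_add)
  qed
  then show ?thesis by (simp add: tdeg_le_iff)
qed

lemma tdeg_one: "tdeg (1 :: 'a::comm_ring_1 mpoly) = 0"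
  by (simp add: tdeg_le_iff[of _ 0, simplified] monomial_degree_def)

lemma polys_n_add: "f \<in> polys_n n \<Longrightarrow> g \<in> polys_n n \<Longrightarrow> f + g \<in> polys_n n"
  unfolding polys_n_def using keys_add[of f g] by blast

lemma polys_n_mult:
  assumes "f \<in> polys_n n" "g \<in> polys_n n"
  shows "(f * g :: 'a::comm_ring_1 mpoly) \<in> polys_n n"
proof -
  have "Poly_Mapping.keys c \<subseteq> {..<n}" if "c \<in> Poly_Mapping.keys (f * g)" for c
  proof -
    from that keys_mult obtain a b where "c = a + b"
      "a \<in> Poly_Mapping.keys f" "b \<in> Poly_Mapping.keys g"
      by blast
    then show ?thesis using assms keys_add[of a b] unfolding polys_n_def by blast
  qed
  then show ?thesis unfolding polys_n_def by simp
qed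

lemma polys_n_zero: "0 \<in> polys_n n"
  unfolding polys_n_def by simp

lemma polys_n_sum: "(\<And>i. i \<in> I \<Longrightarrow> g i \<in> polys_n n) \<Longrightarrow> sum g I \<in> polys_n n"
  by (induction I rule: infinite_finite_induct) (auto simp: polys_n_zero polys_n_add)

lemma polys_n_single: "Poly_Mapping.keys a \<subseteq> {..<n} \<Longrightarrow> Poly_Mapping.single a c \<in> polys_n n"
  unfolding polys_n_def by simp

lemma polys_n_one: "(1 :: 'a::comm_ring_1 mpoly) \<in> polys_n n"
  unfolding polys_n_def by simp

lemma polys_n_Var: "i < n \<Longrightarrow> (Var i :: 'a::comm_ring_1 mpoly) \<in> polys_n n"
  unfolding Var_def by (rule polys_n_single) simp

lemma polys_n_Const: "Const c \<in> polys_n n"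
  unfolding Const_def by (rule polys_n_single) simp

lemma Const_zero: "Const 0 = (0 :: 'a::comm_ring_1 mpoly)"
  by (simp add: Const_def)

lemma Const_one: "Const 1 = (1 :: 'a::comm_ring_1 mpoly)"
  by (simp add: Const_def)

lemma Const_uminus: "Const (- c) = - (Const c :: 'a::comm_ring_1 mpoly)"
  by (simp add: Const_def single_uminus)

lemma lookup_Const_mult:
  "Poly_Mapping.lookup (Const c * f) a = (c :: 'a::comm_ring_1) * Poly_Mapping.lookup f a"
  unfolding Const_def mult_map_scale_conv_mult[symmetric] by (simp add: map.rep_eq when_def)

lemma Const_mult_single: "Const c * Poly_Mapping.single a 1 = Poly_Mapping.single a (c :: 'a::comm_ring_1)"
  by (simp add: Const_def mult_single)

lemma lookup_sum_single:
  "finite M \<Longrightarrow> Poly_Mapping.lookup (\<Sum>b\<in>M. Poly_Mapping.single b (c b)) a = (if a \<in> M then c a else 0)"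
  by (induction M rule: finite_induct) (auto simp: lookup_add lookup_single when_def)

lemma sum_single_lookup:
  assumes "finite M" "Poly_Mapping.keys f \<subseteq> M"
  shows "(\<Sum>b\<in>M. Poly_Mapping.single b (Poly_Mapping.lookup f b)) = f"
  by (rule poly_mapping_eqI) (use assms in \<open>auto simp: lookup_sum_single in_keys_iff\<close>)

context
  fixes n :: nat and \<phi> :: "'a::comm_ring_1 mpoly \<Rightarrow> 'a mpoly"
  assumes hom: "is_Kalg_hom n \<phi>"
begin

lemma Kalg_hom_in_polys_n: "f \<in> polys_n n \<Longrightarrow> \<phi> f \<in> polys_n n"
  using hom unfolding is_Kalg_hom_def by blast

lemma Kalg_hom_add: "f \<in> polys_n n \<Longrightarrow> g \<in> polys_n n \<Longrightarrow> \<phi> (f + g) = \<phi> f + \<phi> g"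
  using hom unfolding is_Kalg_hom_def by blast

lemma Kalg_hom_mult: "f \<in> polys_n n \<Longrightarrow> g \<in> polys_n n \<Longrightarrow> \<phi> (f * g) = \<phi> f * \<phi> g"
  using hom unfolding is_Kalg_hom_def by blast

lemma Kalg_hom_Const: "\<phi> (Const c) = Const c"
  using hom unfolding is_Kalg_hom_def by blast

lemma Kalg_hom_zero: "\<phi> 0 = 0"
  using Kalg_hom_Const[of 0] by (simp add: Const_zero)

lemma Kalg_hom_one: "\<phi> 1 = 1"
  using Kalg_hom_Const[of 1] by (simp add: Const_one)

lemma Kalg_hom_sum: "(\<And>i. i \<in> I \<Longrightarrow> g i \<in> polys_n n) \<Longrightarrow> \<phi> (sum g I) = (\<Sum>i\<in>I. \<phi> (g i))"
  by (induction I rule: infinite_finite_induct) (simp_all add: Kalg_hom_zero Kalg_hom_add polys_n_sum)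

lemma Kalg_hom_Const_mult: "f \<in> polys_n n \<Longrightarrow> \<phi> (Const c * f) = Const c * \<phi> f"
  by (simp add: Kalg_hom_mult polys_n_Const Kalg_hom_Const)

lemma tdeg_Kalg_hom_monomial_le:
  assumes deg: "\<forall>i<n. tdeg (\<phi> (Var i)) \<le> d"
  shows "Poly_Mapping.keys a \<subseteq> {..<n} \<Longrightarrow>
    tdeg (\<phi> (Poly_Mapping.single a 1)) \<le> d * monomial_degree a"
proof (induction "monomial_degree a" arbitrary: a)
  case 0
  then show ?case by (simp add: monomial_degree_eq_0_iff Kalg_hom_one tdeg_one)
next
  case (Suc k)
  then have "a \<noteq> 0"
    using monomial_degree_eq_0_iff[of a] by simp
  then obtain i where i: "i \<in> Poly_Mapping.keys a"
    by (metis ex_in_conv keys_eq_empty)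
  with Suc.prems have "i < n" by blast
  define b where "b = a - Poly_Mapping.single i 1"
  have a_eq: "a = b + Poly_Mapping.single i 1"
    by (rule poly_mapping_eqI)
      (use i in \<open>auto simp: b_def lookup_add lookup_single when_def in_keys_iff lookup_minus\<close>)
  have b_keys: "Poly_Mapping.keys b \<subseteq> {..<n}"
  proof -
    have "Poly_Mapping.keys b \<subseteq> Poly_Mapping.keys a"
      by (auto simp: b_def in_keys_iff lookup_minus)
    then show ?thesis using Suc.prems by blast
  qed
  have b_deg: "k = monomial_degree b"
    using Suc.hyps(2) a_eq by (simp add: monomial_degree_add)
  have "Poly_Mapping.single a (1::'a) = Poly_Mapping.single b 1 * Var i"
    by (simp add: a_eq Var_def mult_single)
  then have "\<phi> (Poly_Mapping.single a 1) = \<phi> (Poly_Mapping.single b 1) * \<phi> (Var i)"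
    using Kalg_hom_mult[OF polys_n_single[OF b_keys] polys_n_Var[OF \<open>i < n\<close>]] by simp
  then have "tdeg (\<phi> (Poly_Mapping.single a 1)) \<le> tdeg (\<phi> (Poly_Mapping.single b 1)) + tdeg (\<phi> (Var i))"
    using tdeg_mult_le by metis
  also have "\<dots> \<le> d * k + d"
    using Suc.hyps(1)[OF b_deg b_keys] deg \<open>i < n\<close> b_deg by (intro add_mono) auto
  finally show ?case using Suc.hyps(2)[symmetric] by (simp add: algebra_simps)
qed

end

section \<open>Counting monomials\<close>

definition monomials_upto :: "nat \<Rightarrow> nat \<Rightarrow> (nat \<Rightarrow>\<^sub>0 nat) set" where
  "monomials_upto n T = {a. Poly_Mapping.keys a \<subseteq> {..<n} \<and> monomial_degree a \<le> T}"

lemma keys_subset_monomials_upto: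
  "f \<in> polys_n n \<Longrightarrow> tdeg f \<le> T \<Longrightarrow> Poly_Mapping.keys f \<subseteq> monomials_upto n T"
  by (auto simp: monomials_upto_def polys_n_def tdeg_le_iff)

definition exponent_list :: "nat \<Rightarrow> nat \<Rightarrow> (nat \<Rightarrow>\<^sub>0 nat) \<Rightarrow> nat list" where
  "exponent_list n T a = map (Poly_Mapping.lookup a) [0..<n] @ [T - monomial_degree a]"

lemma monomial_degree_eq_sum_lessThan:
  "Poly_Mapping.keys a \<subseteq> {..<n} \<Longrightarrow> monomial_degree a = sum (Poly_Mapping.lookup a) {..<n}"
  by (simp add: monomial_degree_eq_sum)

lemma inj_on_exponent_list: "inj_on (exponent_list n T) (monomials_upto n T)"
proof (rule inj_onI)
  fix a b assume a: "a \<in> monomials_upto n T" and b: "b \<in> monomials_upto n T"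
    and "exponent_list n T a = exponent_list n T b"
  then have "\<forall>i<n. Poly_Mapping.lookup a i = Poly_Mapping.lookup b i"
    by (simp add: exponent_list_def map_eq_conv)
  moreover have "Poly_Mapping.lookup a i = 0" "Poly_Mapping.lookup b i = 0" if "\<not> i < n" for i
    using a b that by (auto simp: monomials_upto_def in_keys_iff)
  ultimately show "a = b"
    by (metis poly_mapping_eqI)
qed

lemma exponent_list_image:
  "exponent_list n T ` monomials_upto n T = {l. length l = Suc n \<and> sum_list l = T}"
proof (intro equalityI subsetI)
  fix l assume "l \<in> exponent_list n T ` monomials_upto n T"
  then show "l \<in> {l. length l = Suc n \<and> sum_list l = T}"
    by (auto simp: exponent_list_def monomials_upto_def monomial_degree_eq_sum_lessThan
        interv_sum_list_conv_sum_set_nat atLeast0LessThan)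
next
  fix l assume "l \<in> {l. length l = Suc n \<and> sum_list l = T}"
  then have l: "length l = Suc n" "sum_list l = T" by auto
  define a where "a = Poly_Mapping.nth (take n l)"
  have lookup_a: "Poly_Mapping.lookup a i = (if i < n then l ! i else 0)" for i
    using l by (simp add: a_def nth_default_def)
  have a_keys: "Poly_Mapping.keys a \<subseteq> {..<n}"
    by (auto simp: in_keys_iff lookup_a split: if_splits)
  have l_eq: "l = take n l @ [l ! n]"
    using l take_Suc_conv_app_nth[of n l] by simp
  have "monomial_degree a = sum_list (take n l)"
    using l a_keys
    by (simp add: monomial_degree_eq_sum_lessThan lookup_a sum_list_sum_nth atLeast0LessThan min_def)
  moreover have "T = sum_list (take n l) + l ! n"
    using l by (subst (asm) l_eq) simp
  moreover have "map (Poly_Mapping.lookup a) [0..<n] = take n l"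
    using l by (intro nth_equalityI) (auto simp: lookup_a)
  ultimately have "exponent_list n T a = l" and "a \<in> monomials_upto n T"
    using l_eq a_keys by (auto simp: exponent_list_def monomials_upto_def)
  then show "l \<in> exponent_list n T ` monomials_upto n T" by blast
qed

lemma card_monomials_upto: "card (monomials_upto n T) = (T + n) choose n"
  using card_image[OF inj_on_exponent_list, of n T] card_length_sum_list[of "Suc n" T]
    binomial_symmetric[of T "T + n"] by (simp add: exponent_list_image)

lemma finite_monomials_upto: "finite (monomials_upto n T)"
  using card_monomials_upto[of n T] by (intro card_ge_0_finite) simp

section \<open>An asymptotic estimate for binomial coefficients\<close>

lemma power_le_fact_mult_binomial: "t ^ k \<le> fact k * ((t + k) choose k)"
proof -
  have "fact t * t ^ k \<le> (fact (t + k) :: nat)"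
  proof (induction k)
    case (Suc k)
    have "fact t * t ^ Suc k = t * (fact t * t ^ k)" by (simp add: ac_simps)
    also have "\<dots> \<le> (t + Suc k) * fact (t + k)" using Suc by (intro mult_mono) auto
    finally show ?case by simp
  qed simp
  also have "\<dots> = fact t * (fact k * ((t + k) choose k))"
    using binomial_fact_lemma[of k "t + k"] by (simp add: ac_simps)
  finally show ?thesis by simp
qed

lemma le_power_if_binomial_bound:
  fixes m n d D :: nat
  assumes bound: "\<And>t. m * ((t + n) choose n) \<le> (D + d * t + n) choose n"
  shows "m \<le> d ^ n"
proof -
  define c where "c = D + n"
  have "real m \<le> (real d + real c / real t) ^ n" if "t \<ge> 1" for t
  proof -
    have "m * t ^ n \<le> fact n * (m * ((t + n) choose n))"
      using power_le_fact_mult_binomial[of t n] by (simp add: mult.left_commute)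
    also have "\<dots> \<le> fact n * ((D + d * t + n) choose n)"
      using bound by simp
    also have "\<dots> \<le> (d * t + c) ^ n"
      using binomial_fact_pow[of "D + d * t + n" n] by (simp add: c_def ac_simps)
    finally have "real m * real t ^ n \<le> (real d * real t + real c) ^ n"
      by (metis of_nat_add of_nat_le_iff of_nat_mult of_nat_power)
    then have "real m \<le> ((real d * real t + real c) / real t) ^ n"
      using that by (simp add: field_simps power_divide)
    also have "(real d * real t + real c) / real t = real d + real c / real t"
      using that by (simp add: field_simps)
    finally show ?thesis .
  qed
  moreover have "(\<lambda>t. (real d + real c / real t) ^ n) \<longlonglongrightarrow> (real d + 0) ^ n"
    by (intro tendsto_intros lim_const_over_n)
  ultimately have "real m \<le> (real d + 0) ^ n"
    by (intro LIMSEQ_le_const) auto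
  then show ?thesis by (metis add_0_right of_nat_le_iff of_nat_power)
qed

definition const_independent :: "'i set \<Rightarrow> ('i \<Rightarrow> 'a::comm_ring_1 mpoly) \<Rightarrow> bool" where
  "const_independent I w \<longleftrightarrow> (\<forall>c. (\<Sum>i\<in>I. Const (c i) * w i) = 0 \<longrightarrow> (\<forall>i\<in>I. c i = 0))"

lemma const_independent_imp_inj_on:
  fixes w :: "'i \<Rightarrow> 'a::comm_ring_1 mpoly"
  assumes "finite I" "const_independent I w"
  shows "inj_on w I"
proof (rule inj_onI, rule ccontr)
  fix i j assume ij: "i \<in> I" "j \<in> I" "w i = w j" "i \<noteq> j"
  define c where "c k = (if k = i then 1 else if k = j then -1 else (0::'a))" for k
  have "(\<Sum>k\<in>I. Const (c k) * w k) = (\<Sum>k\<in>{i, j}. Const (c k) * w k)"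
    using ij assms(1) by (intro sum.mono_neutral_right) (auto simp: c_def Const_zero)
  also have "\<dots> = 0"
    using ij by (simp add: c_def Const_one Const_uminus)
  finally have "c i = 0"
    using assms(2) ij(1) unfolding const_independent_def by blast
  then show False by (simp add: c_def)
qed

lemma card_le_if_const_independent:
  fixes w :: "'i \<Rightarrow> 'a::field mpoly"
  assumes fin: "finite I" "finite M" and indep: "const_independent I w"
    and supp: "\<And>i. i \<in> I \<Longrightarrow> Poly_Mapping.keys (w i) \<subseteq> M"
  shows "card I \<le> card M"
proof -
  interpret V: vector_space "\<lambda>(s::'a) (v::'a mpoly). Const s * v"
    by unfold_locales (simp_all add: Const_def algebra_simps single_add mult_single)
  have inj: "inj_on w I"
    using fin(1) indep by (rule const_independent_imp_inj_on)
  have "V.independent (w ` I)"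
  proof (rule V.independent_if_scalars_zero)
    fix f v assume "(\<Sum>y\<in>w ` I. Const (f y) * y) = 0" "v \<in> w ` I"
    then show "f v = 0"
      using indep inj unfolding const_independent_def by (auto simp: sum.reindex)
  qed (use fin in simp)
  moreover have "w ` I \<subseteq> V.span ((\<lambda>b. Poly_Mapping.single b 1) ` M)"
  proof
    fix v assume "v \<in> w ` I"
    then have "v = (\<Sum>b\<in>M. Const (Poly_Mapping.lookup v b) * Poly_Mapping.single b 1)"
      using supp fin by (auto simp: Const_mult_single sum_single_lookup)
    also have "\<dots> \<in> V.span ((\<lambda>b. Poly_Mapping.single b 1) ` M)"
      by (intro V.span_sum V.span_scale V.span_base) auto
    finally show "v \<in> V.span ((\<lambda>b. Poly_Mapping.single b 1) ` M)" .
  qed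
  ultimately have "card (w ` I) \<le> card ((\<lambda>b. Poly_Mapping.single b (1::'a)) ` M)"
    using V.independent_span_bound fin by blast
  also have "\<dots> \<le> card M" using fin(2) by (rule card_image_le)
  finally show ?thesis using card_image[OF inj] by simp
qed

section \<open>Clearing denominators\<close>

abbreviation to_fract :: "'a::idom \<Rightarrow> 'a fract" where
  "to_fract a \<equiv> Fraction_Field.Fract a 1"

lemma to_fract_eq_0_iff: "to_fract (a :: 'a::idom) = 0 \<longleftrightarrow> a = 0"
  by (simp add: Zero_fract_def eq_fract)

lemma sum_to_fract: "(\<Sum>i\<in>I. to_fract (g i)) = to_fract (sum g I :: 'a::idom)"
  by (induction I rule: infinite_finite_induct) (simp_all add: fract_collapse)

lemma common_denominator:
  fixes R :: "'a::idom set"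
  assumes "finite I" and R: "1 \<in> R" "\<And>x y. x \<in> R \<Longrightarrow> y \<in> R \<Longrightarrow> x * y \<in> R"
    and fractions: "\<And>i. i \<in> I \<Longrightarrow> \<exists>a\<in>R. \<exists>b\<in>R. b \<noteq> 0 \<and> u i = Fraction_Field.Fract a b"
  shows "\<exists>q\<in>R. q \<noteq> 0 \<and> (\<forall>i\<in>I. \<exists>c\<in>R. to_fract q * u i = to_fract c)"
  using assms(1) fractions
proof (induction I rule: finite_induct)
  case empty
  show ?case using R(1) one_neq_zero by blast
next
  case (insert x I)
  then obtain q where q: "q \<in> R" "q \<noteq> 0" "\<forall>i\<in>I. \<exists>c\<in>R. to_fract q * u i = to_fract c"
    by blast
  obtain a b where ab: "a \<in> R" "b \<in> R" "b \<noteq> 0" "u x = Fraction_Field.Fract a b"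
    using insert.prems by blast
  have "\<exists>c\<in>R. to_fract (q * b) * u i = to_fract c" if "i \<in> insert x I" for i
  proof (cases "i = x")
    case True
    then have "to_fract (q * b) * u i = Fraction_Field.Fract (b * (q * a)) (b * 1)"
      using ab(4) by (simp add: ac_simps)
    also have "\<dots> = to_fract (q * a)"
      using ab(3) by (rule mult_fract_cancel)
    finally have "to_fract (q * b) * u i = to_fract (q * a)" .
    then show ?thesis using R(2)[OF q(1) ab(1)] by (rule bexI)
  next
    case False
    with that have "i \<in> I" by simp
    with q(3) obtain c where "c \<in> R" "to_fract q * u i = to_fract c"
      by blast
    have "to_fract (q * b) * u i = to_fract b * (to_fract q * u i)"
      by (simp add: mult.commute mult.left_commute)
    also have "\<dots> = to_fract (b * c)"
      using \<open>to_fract q * u i = to_fract c\<close> by simp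
    finally have "to_fract (q * b) * u i = to_fract (b * c)" .
    then show ?thesis using R(2)[OF ab(2) \<open>c \<in> R\<close>] by (rule bexI)
  qed
  moreover have "q * b \<noteq> 0"
    using q(2) ab(3) by simp
  ultimately show ?case
    using R(2)[OF q(1) ab(2)] by blast
qed

definition mpoly_to_fract :: "'a::idom mpoly \<Rightarrow> 'a fract mpoly" where
  "mpoly_to_fract f = Poly_Mapping.map (\<lambda>x. to_fract x) f"

lemma lookup_mpoly_to_fract: "Poly_Mapping.lookup (mpoly_to_fract f) a = to_fract (Poly_Mapping.lookup f a)"
  by (simp add: mpoly_to_fract_def map.rep_eq when_def fract_collapse)

lemma keys_mpoly_to_fract: "Poly_Mapping.keys (mpoly_to_fract f) = Poly_Mapping.keys f"
  by (auto simp: in_keys_iff lookup_mpoly_to_fract to_fract_eq_0_iff)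

lemma const_independent_mpoly_to_fract:
  assumes fin: "finite I" and indep: "const_independent I w"
  shows "const_independent I (mpoly_to_fract \<circ> w)"
  unfolding const_independent_def
proof (intro allI impI)
  fix u assume rel: "(\<Sum>i\<in>I. Const (u i) * (mpoly_to_fract \<circ> w) i) = 0"
  have "\<exists>a\<in>UNIV. \<exists>b\<in>UNIV. b \<noteq> 0 \<and> u i = Fraction_Field.Fract a b" for i
    by (cases "u i") blast
  then obtain q where q: "q \<noteq> 0" "\<forall>i\<in>I. \<exists>c. to_fract q * u i = to_fract c"
    using common_denominator[OF fin, of UNIV u] by blast
  then obtain c where c: "\<forall>i\<in>I. to_fract q * u i = to_fract (c i)"
    by metis
  have "(\<Sum>i\<in>I. Const (c i) * w i) = 0"
  proof (rule poly_mapping_eqI)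
    fix a
    have "to_fract (\<Sum>i\<in>I. c i * Poly_Mapping.lookup (w i) a)
        = to_fract q * (\<Sum>i\<in>I. u i * to_fract (Poly_Mapping.lookup (w i) a))"
      using c by (simp add: sum_distrib_left mult.assoc[symmetric] flip: sum_to_fract)
    also have "\<dots> = 0"
      using arg_cong[OF rel, of "\<lambda>f. Poly_Mapping.lookup f a"]
      by (simp add: lookup_sum lookup_Const_mult lookup_mpoly_to_fract)
    finally show "Poly_Mapping.lookup (\<Sum>i\<in>I. Const (c i) * w i) a = Poly_Mapping.lookup 0 a"
      by (simp add: lookup_sum lookup_Const_mult to_fract_eq_0_iff)
  qed
  then have "\<forall>i\<in>I. c i = 0"
    using indep unfolding const_independent_def by blast
  then show "\<forall>i\<in>I. u i = 0"
    using c q(1) by (auto simp: to_fract_eq_0_iff fract_collapse)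
qed

lemma card_le_if_const_independent_idom:
  fixes w :: "'i \<Rightarrow> 'a::idom mpoly"
  assumes "finite I" "finite M" "const_independent I w"
    and "\<And>i. i \<in> I \<Longrightarrow> Poly_Mapping.keys (w i) \<subseteq> M"
  shows "card I \<le> card M"
  using assms const_independent_mpoly_to_fract
  by (intro card_le_if_const_independent[of I M "mpoly_to_fract \<circ> w"]) (auto simp: keys_mpoly_to_fract)

section \<open>The degree of the field extension\<close>

lemma Kalg_hom_cleared_relation_trivial:
  fixes \<phi> :: "'a::idom mpoly \<Rightarrow> 'a mpoly"
  assumes hom: "is_Kalg_hom n \<phi>" and inj: "inj_on \<phi> (polys_n n)"
    and indep: "lin_indep_over (frac_img n \<phi>) S"
    and q: "q \<noteq> 0" "\<forall>s\<in>S. to_fract q * s = to_fract (P s)"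
    and h: "\<And>s. s \<in> S \<Longrightarrow> h s \<in> polys_n n"
    and rel: "(\<Sum>s\<in>S. P s * \<phi> (h s)) = 0"
  shows "\<forall>s\<in>S. h s = 0"
proof -
  have "to_fract q * (\<Sum>s\<in>S. to_fract (\<phi> (h s)) * s) = (\<Sum>s\<in>S. to_fract (\<phi> (h s)) * (to_fract q * s))"
    by (simp add: sum_distrib_left mult.left_commute)
  also have "\<dots> = (\<Sum>s\<in>S. to_fract (P s * \<phi> (h s)))"
    using q(2) by (intro sum.cong) (simp_all add: mult.commute)
  also have "\<dots> = 0"
    using rel by (simp add: sum_to_fract to_fract_eq_0_iff)
  finally have "(\<Sum>s\<in>S. to_fract (\<phi> (h s)) * s) = 0"
    using q(1) by (simp add: to_fract_eq_0_iff)
  moreover have "to_fract (\<phi> (h s)) \<in> frac_img n \<phi>" if "s \<in> S" for s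
  proof -
    have "to_fract (\<phi> (h s)) = Fraction_Field.Fract (\<phi> (h s)) (\<phi> 1)"
      by (simp add: Kalg_hom_one[OF hom])
    then show ?thesis
      unfolding frac_img_def using h[OF that] polys_n_one one_neq_zero by blast
  qed
  ultimately have "\<forall>s\<in>S. to_fract (\<phi> (h s)) = 0"
    using indep[unfolded lin_indep_over_def, rule_format, of "\<lambda>s. to_fract (\<phi> (h s))"] by blast
  show ?thesis
  proof
    fix s assume "s \<in> S"
    then have "\<phi> (h s) = \<phi> 0"
      using \<open>\<forall>s\<in>S. to_fract (\<phi> (h s)) = 0\<close> by (simp add: to_fract_eq_0_iff Kalg_hom_zero[OF hom])
    then show "h s = 0"
      using inj_onD[OF inj _ h[OF \<open>s \<in> S\<close>] polys_n_zero] by blast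
  qed
qed

lemma Kalg_hom_products_const_independent:
  fixes \<phi> :: "'a::idom mpoly \<Rightarrow> 'a mpoly"
  assumes hom: "is_Kalg_hom n \<phi>" and inj: "inj_on \<phi> (polys_n n)"
    and indep: "lin_indep_over (frac_img n \<phi>) S"
    and q: "q \<noteq> 0" "\<forall>s\<in>S. to_fract q * s = to_fract (P s)"
  shows "const_independent (S \<times> monomials_upto n t) (\<lambda>(s, a). P s * \<phi> (Poly_Mapping.single a 1))"
  unfolding const_independent_def
proof (intro allI impI)
  let ?M = "monomials_upto n t"
  fix c assume rel: "(\<Sum>i\<in>S \<times> ?M. Const (c i) * (case i of (s, a) \<Rightarrow> P s * \<phi> (Poly_Mapping.single a 1))) = 0"
  define h where "h s = (\<Sum>a\<in>?M. Const (c (s, a)) * Poly_Mapping.single a 1)" for s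
  have monomial_in: "Poly_Mapping.single a 1 \<in> polys_n n" if "a \<in> ?M" for a
    using that by (intro polys_n_single) (simp add: monomials_upto_def)
  have h_in: "h s \<in> polys_n n" for s
    unfolding h_def by (intro polys_n_sum polys_n_mult polys_n_Const monomial_in)
  have "\<phi> (h s) = (\<Sum>a\<in>?M. Const (c (s, a)) * \<phi> (Poly_Mapping.single a 1))" for s
    unfolding h_def
    by (simp add: Kalg_hom_sum[OF hom] Kalg_hom_Const_mult[OF hom] polys_n_mult polys_n_Const monomial_in)
  then have "(\<Sum>s\<in>S. P s * \<phi> (h s))
      = (\<Sum>s\<in>S. \<Sum>a\<in>?M. Const (c (s, a)) * (P s * \<phi> (Poly_Mapping.single a 1)))"
    by (simp add: sum_distrib_left mult.left_commute)
  also have "\<dots> = 0"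
    using rel by (simp add: sum.cartesian_product case_prod_unfold)
  finally have "\<forall>s\<in>S. h s = 0"
    by (rule Kalg_hom_cleared_relation_trivial[OF hom inj indep q h_in])
  moreover have "Poly_Mapping.lookup (h s) a = c (s, a)" if "a \<in> ?M" for s a
    using that by (simp add: h_def Const_mult_single lookup_sum_single finite_monomials_upto)
  ultimately show "\<forall>i\<in>S \<times> ?M. c i = 0"
    by (metis SigmaE lookup_zero)
qed

lemma card_lin_indep_over_frac_img_le:
  fixes \<phi> :: "'a::idom mpoly \<Rightarrow> 'a mpoly"
  assumes hom: "is_Kalg_hom n \<phi>" and inj: "inj_on \<phi> (polys_n n)"
    and deg: "\<forall>i<n. tdeg (\<phi> (Var i)) \<le> d"
    and fin: "finite S" and S: "S \<subseteq> frac_B n" and indep: "lin_indep_over (frac_img n \<phi>) S"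
  shows "card S \<le> d ^ n"
proof -
  have "\<exists>a\<in>polys_n n. \<exists>b\<in>polys_n n. b \<noteq> 0 \<and> s = Fraction_Field.Fract a b" if "s \<in> S" for s
    using S that unfolding frac_B_def by blast
  then obtain q where q: "q \<in> polys_n n" "q \<noteq> 0" "\<forall>s\<in>S. \<exists>P\<in>polys_n n. to_fract q * s = to_fract P"
    using common_denominator[of S "polys_n n" "\<lambda>s. s"] fin polys_n_one polys_n_mult by blast
  then obtain P where P_in: "\<forall>s\<in>S. P s \<in> polys_n n"
    and P_eq: "\<forall>s\<in>S. to_fract q * s = to_fract (P s)"
    by metis
  define D where "D = (\<Sum>s\<in>S. tdeg (P s))"
  have "card S * ((t + n) choose n) \<le> (D + d * t + n) choose n" for t
  proof -
    let ?w = "\<lambda>(s, a). P s * \<phi> (Poly_Mapping.single a 1)"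
    have "card (S \<times> monomials_upto n t) \<le> card (monomials_upto n (D + d * t))"
    proof (rule card_le_if_const_independent_idom)
      show "finite (S \<times> monomials_upto n t)"
        using fin finite_monomials_upto by simp
      show "const_independent (S \<times> monomials_upto n t) ?w"
        by (rule Kalg_hom_products_const_independent[OF hom inj indep q(2) P_eq])
    next
      fix i assume "i \<in> S \<times> monomials_upto n t"
      then obtain s a where i: "i = (s, a)" "s \<in> S" "a \<in> monomials_upto n t" by blast
      then have a_keys: "Poly_Mapping.keys a \<subseteq> {..<n}" and "monomial_degree a \<le> t"
        by (auto simp: monomials_upto_def)
      have "tdeg (P s) \<le> D"
        unfolding D_def using fin i(2) by (intro member_le_sum) auto
      moreover have "tdeg (\<phi> (Poly_Mapping.single a 1)) \<le> d * t"
        using tdeg_Kalg_hom_monomial_le[OF hom deg a_keys] mult_le_mono2[OF \<open>monomial_degree a \<le> t\<close>]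
        by (rule le_trans)
      ultimately have "tdeg (?w i) \<le> D + d * t"
        using tdeg_mult_le[of "P s" "\<phi> (Poly_Mapping.single a 1)"] i(1) by simp
      moreover have "?w i \<in> polys_n n"
        using P_in i(1,2) by (simp add: polys_n_mult Kalg_hom_in_polys_n[OF hom] polys_n_single[OF a_keys])
      ultimately show "Poly_Mapping.keys (?w i) \<subseteq> monomials_upto n (D + d * t)"
        by (intro keys_subset_monomials_upto)
    qed (rule finite_monomials_upto)
    then show ?thesis by (simp add: card_cartesian_product card_monomials_upto)
  qed
  then show ?thesis by (rule le_power_if_binomial_bound)
qed

lemma one_le_ext_degree:
  assumes "1 \<in> E"
  shows "1 \<le> ext_degree E L"
proof -
  have "lin_indep_over L {1}" by (simp add: lin_indep_over_def)
  with assms have "enat (card {1}) \<le> ext_degree E L"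
    unfolding ext_degree_def by (intro Sup_upper CollectI exI[of _ "{1}"]) simp
  then show ?thesis by (simp add: one_enat_def)
qed

lemma ext_degree_le:
  "(\<And>S. finite S \<Longrightarrow> S \<subseteq> E \<Longrightarrow> lin_indep_over L S \<Longrightarrow> card S \<le> N) \<Longrightarrow> ext_degree E L \<le> enat N"
  unfolding ext_degree_def by (auto intro!: Sup_least)

lemma one_in_frac_B: "1 \<in> frac_B n"
  unfolding frac_B_def One_fract_def using polys_n_one one_neq_zero by blast

lemma ext_degree_frac_img_le:
  fixes \<phi> :: "'a::idom mpoly \<Rightarrow> 'a mpoly"
  assumes "is_Kalg_hom n \<phi>" "inj_on \<phi> (polys_n n)" "\<forall>i<n. tdeg (\<phi> (Var i)) \<le> d"
  shows "ext_degree (frac_B n) (frac_img n \<phi>) \<le> enat (d ^ n)"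
  using card_lin_indep_over_frac_img_le[OF assms] by (rule ext_degree_le)

theorem mainTheorem3:
  fixes n p d :: nat
  assumes "n \<ge> 1" and "d \<ge> 1" and "prime p" and "p > d ^ n"
    and "CHAR('a::idom) = p"
  shows "CJC n p d TYPE('a) \<longleftrightarrow> NJC n p d TYPE('a)"
proof -
  have no_multiple: "ext_degree (frac_B n) (frac_img n \<phi>) \<noteq> enat (p * k)"
    if "is_Kalg_hom n \<phi>" "inj_on \<phi> (polys_n n)" "\<forall>i<n. tdeg (\<phi> (Var i)) \<le> d"
    for \<phi> :: "'a mpoly \<Rightarrow> 'a mpoly" and k
  proof
    assume k: "ext_degree (frac_B n) (frac_img n \<phi>) = enat (p * k)"
    have "1 \<le> p * k"
      using one_le_ext_degree[OF one_in_frac_B, of n "frac_img n \<phi>"] k by (simp add: one_enat_def)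
    moreover have "p * k \<le> d ^ n"
      using ext_degree_frac_img_le[OF that] k by simp
    ultimately show False
      using \<open>p > d ^ n\<close> by (cases k) auto
  qed
  show ?thesis
    unfolding CJC_def NJC_def using no_multiple by auto
qed

end
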